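(* Assume $\gamma^{(l)}_i>0$ for all $l,i$. Fix $m\ge1$, a neuron $j$ of layer $m$, a label $q$, and set $u=s^{(m)}_{j,q}$. Then for every $0\le l\le m$, neuron $i$ of layer $l$, and $p,k\in\{+,-\}$: (1) $\dfrac{\partial a^{(m,p\oplus q)}_{\mathrm{stop},j}}{\partial a^{(l,k)}_{\mathrm{stop},i}}=\Gamma_u(s^{(l)}_{i,p\oplus k})$, where the derivative is taken of the affine map sending the layer-$l$ pair $(a^{(l,+)}_{\mathrm{stop}},a^{(l,-)}_{\mathrm{stop}})$ (treated as free variables) to the layer-$m$ pair via the Stopping Decomposition recursion with all gate factors $\mathbf 1[z^{(l')}_{h}>0]$, $l<l'\le m$, frozen at their values at $x$; (2) $J_{ji}=\xi_{q,+}\bigl(\Gamma_u(s^{(l)}_{i,+})-\Gamma_u(s^{(l)}_{i,-})\bigr)$, where $J=D^{(m)}W^{(m)}D^{(m-1)}W^{(m-1)}\cdots D^{(l+1)}W^{(l+1)}$ (identity if $l=m$) with $D^{(l')}=\mathrm{diag}(\mathbf 1[z^{(l')}>0])$, i.e. $J_{ji}=\partial a^{(m)}_j/\partial a^{(l)}_i$ with the convention $\mathrm{ReLU}'(0)=0$.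
   Context: ReLU network: $a^{(0)}=x$, $z^{(l)}=b^{(l)}+W^{(l)}a^{(l-1)}$, $a^{(l)}=\mathrm{ReLU}(z^{(l)})$; $W^{(l,\pm)}=(W^{(l)})^\pm$, $b^{(l,\pm)}=(b^{(l)})^\pm$ entrywise, $u^\pm=\max(\pm u,0)$. Stopping Decomposition: $a^{(0,\pm)}_{\mathrm{stop},k}=x^\pm_k$, $z^{(l,+)}_i=b^{(l,+)}_i+\sum_hW^{(l,+)}_{ih}a^{(l-1,+)}_{\mathrm{stop},h}+\sum_hW^{(l,-)}_{ih}a^{(l-1,-)}_{\mathrm{stop},h}$, $z^{(l,-)}_i=b^{(l,-)}_i+\sum_hW^{(l,+)}_{ih}a^{(l-1,-)}_{\mathrm{stop},h}+\sum_hW^{(l,-)}_{ih}a^{(l-1,+)}_{\mathrm{stop},h}$, $a^{(l,\pm)}_{\mathrm{stop},i}=\mathbf 1[z^{(l)}_i>0]\,z^{(l,\pm)}_i$. Labels $p,q,r,k\in\{+,-\}$; $p\oplus q=+$ if $p=q$, else $-$; $\xi_{p,q}=1$ if $p=q$, else $-1$. Stopping-Game chain: states $s^{(l)}_{i,r}$ ($0\le l\le L$) plus a cemetery $\perp$. From $s^{(l)}_{i,r}$ with $l\ge1$: if $z^{(l)}_i\le0$ go to $\perp$ (discount factor irrelevant); if $z^{(l)}_i>0$ go to $s^{(l-1)}_{h,r'}$ with probability $W^{(l,r\oplus r')}_{ih}/\gamma^{(l)}_i$, where $\gamma^{(l)}_i=\sum_h|W^{(l)}_{ih}|$, with discount factor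 $\gamma^{(l)}_i$. States at layer $0$ and $\perp$ are absorbing/terminal. For a trajectory $\tau=(\tau_0=u,\tau_1,\dots)$ define the cumulative discount $d_0=1$, $d_t=\prod_{m'<t}\gamma(\tau_{m'})$ where $\gamma(\tau_{m'})$ is the discount factor of the continuation taken at $\tau_{m'}$. The discounted occupation measure is $\Gamma_u(v)=\mathbb{E}[\sum_t d_t\mathbf 1\{\tau_t=v\}]$. *)

theory Defs
  imports Complex_Main
begin

text \<open>ReLU network with L layers, widths n l (layer 0 = input of width n 0),
  weights W l i h (layer l, neuron i, neuron h of layer l-1), biases b l i, input x.
  Signs/labels are encoded as bool: True = +, False = -.\<close>

definition posp :: "real \<Rightarrow> real" where "posp u = max u 0"
definition negp :: "real \<Rightarrow> real" where "negp u = max (- u) 0"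

definition sxor :: "bool \<Rightarrow> bool \<Rightarrow> bool" where "sxor p q = (p = q)"
definition xi :: "bool \<Rightarrow> bool \<Rightarrow> real" where "xi p q = (if p = q then 1 else -1)"

definition Wpm :: "(nat \<Rightarrow> nat \<Rightarrow> nat \<Rightarrow> real) \<Rightarrow> nat \<Rightarrow> bool \<Rightarrow> nat \<Rightarrow> nat \<Rightarrow> real" where
  "Wpm W l s i h = (if s then posp (W l i h) else negp (W l i h))"
definition Bpm :: "(nat \<Rightarrow> nat \<Rightarrow> real) \<Rightarrow> nat \<Rightarrow> bool \<Rightarrow> nat \<Rightarrow> real" where
  "Bpm b l s i = (if s then posp (b l i) else negp (b l i))"

fun fwd_a :: "(nat \<Rightarrow> nat) \<Rightarrow> (nat \<Rightarrow> nat \<Rightarrow> nat \<Rightarrow> real) \<Rightarrow> (nat \<Rightarrow> nat \<Rightarrow> real) \<Rightarrow> (nat \<Rightarrow> real)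
    \<Rightarrow> nat \<Rightarrow> nat \<Rightarrow> real" where
  "fwd_a n W b x 0 i = x i"
| "fwd_a n W b x (Suc l) i = max (b (Suc l) i + (\<Sum>h<n l. W (Suc l) i h * fwd_a n W b x l h)) 0"

definition zpre :: "(nat \<Rightarrow> nat) \<Rightarrow> (nat \<Rightarrow> nat \<Rightarrow> nat \<Rightarrow> real) \<Rightarrow> (nat \<Rightarrow> nat \<Rightarrow> real) \<Rightarrow> (nat \<Rightarrow> real)
    \<Rightarrow> nat \<Rightarrow> nat \<Rightarrow> real" where
  "zpre n W b x l i = b l i + (\<Sum>h<n (l - 1). W l i h * fwd_a n W b x (l - 1) h)"

fun astop :: "(nat \<Rightarrow> nat) \<Rightarrow> (nat \<Rightarrow> nat \<Rightarrow> nat \<Rightarrow> real) \<Rightarrow> (nat \<Rightarrow> nat \<Rightarrow> real) \<Rightarrow> (nat \<Rightarrow> real)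
    \<Rightarrow> nat \<Rightarrow> bool \<Rightarrow> nat \<Rightarrow> real" where
  "astop n W b x 0 s k = (if s then posp (x k) else negp (x k))"
| "astop n W b x (Suc l) s i =
     (if zpre n W b x (Suc l) i > 0 then
        Bpm b (Suc l) s i + (\<Sum>h<n l. Wpm W (Suc l) True i h * astop n W b x l s h
                                    + Wpm W (Suc l) False i h * astop n W b x l (\<not> s) h)
      else 0)"

text \<open>The affine map: layer-l pair A (free variables) propagated d layers up through the
  Stopping Decomposition recursion, with the gates frozen at their values at x.
  fprop n W b x l A d s i is the (s)-component of neuron i at layer l + d.\<close>
fun fprop :: "(nat \<Rightarrow> nat) \<Rightarrow> (nat \<Rightarrow> nat \<Rightarrow> nat \<Rightarrow> real) \<Rightarrow> (nat \<Rightarrow> nat \<Rightarrow> real) \<Rightarrow> (nat \<Rightarrow> real)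
    \<Rightarrow> nat \<Rightarrow> (bool \<Rightarrow> nat \<Rightarrow> real) \<Rightarrow> nat \<Rightarrow> bool \<Rightarrow> nat \<Rightarrow> real" where
  "fprop n W b x l A 0 s i = A s i"
| "fprop n W b x l A (Suc d) s i =
     (if zpre n W b x (l + Suc d) i > 0 then
        Bpm b (l + Suc d) s i + (\<Sum>h<n (l + d). Wpm W (l + Suc d) True i h * fprop n W b x l A d s h
                                    + Wpm W (l + Suc d) False i h * fprop n W b x l A d (\<not> s) h)
      else 0)"

fun Jm :: "(nat \<Rightarrow> nat) \<Rightarrow> (nat \<Rightarrow> nat \<Rightarrow> nat \<Rightarrow> real) \<Rightarrow> (nat \<Rightarrow> nat \<Rightarrow> real) \<Rightarrow> (nat \<Rightarrow> real)
    \<Rightarrow> nat \<Rightarrow> nat \<Rightarrow> nat \<Rightarrow> nat \<Rightarrow> real" where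
  "Jm n W b x l 0 j i = (if j = i then 1 else 0)"
| "Jm n W b x l (Suc d) j i =
     (if zpre n W b x (l + Suc d) j > 0 then 1 else 0) * (\<Sum>h<n (l + d). W (l + Suc d) j h * Jm n W b x l d h i)"

definition gam :: "(nat \<Rightarrow> nat) \<Rightarrow> (nat \<Rightarrow> nat \<Rightarrow> nat \<Rightarrow> real) \<Rightarrow> nat \<Rightarrow> nat \<Rightarrow> real" where
  "gam n W l i = (\<Sum>h<n (l - 1). \<bar>W l i h\<bar>)"

text \<open>Stopping-Game chain. States s^{(l)}_{i,r} = S l i r, cemetery = Bot.\<close>
datatype state = S nat nat bool | Bot

definition Pk :: "(nat \<Rightarrow> nat) \<Rightarrow> (nat \<Rightarrow> nat \<Rightarrow> nat \<Rightarrow> real) \<Rightarrow> (nat \<Rightarrow> nat \<Rightarrow> real) \<Rightarrow> (nat \<Rightarrow> real)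
    \<Rightarrow> state \<Rightarrow> state \<Rightarrow> real" where
  "Pk n W b x s s' = (case s of Bot \<Rightarrow> 0
     | S l i r \<Rightarrow> (if l = 0 then 0
         else if zpre n W b x l i > 0 then
           (case s' of Bot \<Rightarrow> 0
              | S l' h r' \<Rightarrow> (if l' = l - 1 \<and> h < n (l - 1)
                               then Wpm W l (sxor r r') i h / gam n W l i else 0))
         else (case s' of Bot \<Rightarrow> 1 | S _ _ _ \<Rightarrow> 0)))"

text \<open>Discount factor of the continuation s \<rightarrow> s' (irrelevant, set to 1, when going to Bot).\<close>
definition disc :: "(nat \<Rightarrow> nat) \<Rightarrow> (nat \<Rightarrow> nat \<Rightarrow> nat \<Rightarrow> real) \<Rightarrow> state \<Rightarrow> state \<Rightarrow> real" where
  "disc n W s s' = (case s' of Bot \<Rightarrow> 1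
     | S _ _ _ \<Rightarrow> (case s of S l i r \<Rightarrow> gam n W l i | Bot \<Rightarrow> 1))"

definition terminal :: "state \<Rightarrow> bool" where
  "terminal s = (case s of Bot \<Rightarrow> True | S l i r \<Rightarrow> l = 0)"

definition States :: "nat \<Rightarrow> (nat \<Rightarrow> nat) \<Rightarrow> state set" where
  "States L n = {S l i r | l i r. l \<le> L \<and> i < n l} \<union> {Bot}"

text \<open>Trajectory prefixes (tau_0,...,tau_t) starting at u; the chain stops at terminal states.\<close>
definition Traj :: "nat \<Rightarrow> (nat \<Rightarrow> nat) \<Rightarrow> state \<Rightarrow> nat \<Rightarrow> state list set" where
  "Traj L n u t = {\<tau>. length \<tau> = Suc t \<and> set \<tau> \<subseteq> States L n \<and> \<tau> ! 0 = u
                      \<and> (\<forall>t'<t. \<not> terminal (\<tau> ! t'))}"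

definition trajProb :: "(nat \<Rightarrow> nat) \<Rightarrow> (nat \<Rightarrow> nat \<Rightarrow> nat \<Rightarrow> real) \<Rightarrow> (nat \<Rightarrow> nat \<Rightarrow> real) \<Rightarrow> (nat \<Rightarrow> real)
    \<Rightarrow> state list \<Rightarrow> real" where
  "trajProb n W b x \<tau> = (\<Prod>t'<length \<tau> - 1. Pk n W b x (\<tau> ! t') (\<tau> ! Suc t'))"

definition trajDisc :: "(nat \<Rightarrow> nat) \<Rightarrow> (nat \<Rightarrow> nat \<Rightarrow> nat \<Rightarrow> real) \<Rightarrow> state list \<Rightarrow> real" where
  "trajDisc n W \<tau> = (\<Prod>t'<length \<tau> - 1. disc n W (\<tau> ! t') (\<tau> ! Suc t'))"

text \<open>Discounted occupation measure Gamma_u(v) = E[sum_t d_t 1{tau_t = v}]\<close>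
definition Gamma :: "nat \<Rightarrow> (nat \<Rightarrow> nat) \<Rightarrow> (nat \<Rightarrow> nat \<Rightarrow> nat \<Rightarrow> real) \<Rightarrow> (nat \<Rightarrow> nat \<Rightarrow> real) \<Rightarrow> (nat \<Rightarrow> real)
    \<Rightarrow> state \<Rightarrow> state \<Rightarrow> real" where
  "Gamma L n W b x u v = (\<Sum>t. \<Sum>\<tau>\<in>Traj L n u t.
       trajProb n W b x \<tau> * trajDisc n W \<tau> * (if \<tau> ! t = v then 1 else 0))"

end

theory Submission
  imports Defs
begin

text \<open>Every transition of the Stopping-Game chain descends exactly one layer, so from
  s^{(m)}_{j,q} the chain can only be at a layer-l state at time m - l, and Gamma is a single
  time slice. First-step analysis then yields a Bellman equation for Gamma in which the
  transition probability W^{(l,\<plusminus>)}/gamma times the discount gamma gives back W^{(l,\<plusminus>)}.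
  This is the differentiated Stopping Decomposition recursion, and, since
  W^{(l,+)} - W^{(l,-)} = W^{(l)}, the difference of its two components satisfies the
  recursion of the Jacobian product.\<close>

definition occupation :: "nat \<Rightarrow> (nat \<Rightarrow> nat) \<Rightarrow> (nat \<Rightarrow> nat \<Rightarrow> nat \<Rightarrow> real) \<Rightarrow> (nat \<Rightarrow> nat \<Rightarrow> real)
    \<Rightarrow> (nat \<Rightarrow> real) \<Rightarrow> nat \<Rightarrow> state \<Rightarrow> state \<Rightarrow> real" where
  "occupation L n W b x t u v = (\<Sum>\<tau>\<in>Traj L n u t.
       trajProb n W b x \<tau> * trajDisc n W \<tau> * (if \<tau> ! t = v then 1 else 0))"

lemma Gamma_eq_suminf_occupation:
  "Gamma L n W b x u v = (\<Sum>t. occupation L n W b x t u v)"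
  unfolding Gamma_def occupation_def ..

lemma finite_States: "finite (States L n)"
proof -
  have "States L n \<subseteq> insert Bot ((\<lambda>((l, i), r). S l i r) ` ((SIGMA l:{..L}. {..<n l}) \<times> UNIV))"
    unfolding States_def by (auto simp: image_iff)
  then show ?thesis
    by (rule finite_subset) auto
qed

lemma finite_Traj: "finite (Traj L n u t)"
proof -
  have "Traj L n u t \<subseteq> {\<tau>. set \<tau> \<subseteq> States L n \<and> length \<tau> = Suc t}"
    unfolding Traj_def by auto
  then show ?thesis
    using finite_lists_length_eq[OF finite_States] by (rule finite_subset)
qed

lemma Traj_0: "Traj L n u 0 = (if u \<in> States L n then {[u]} else {})"
  unfolding Traj_def by (auto simp: length_Suc_conv)

lemma Traj_Suc_terminal: "terminal u \<Longrightarrow> Traj L n u (Suc t) = {}"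
  unfolding Traj_def by auto

lemma Traj_Suc:
  assumes "u \<in> States L n" "\<not> terminal u"
  shows "Traj L n u (Suc t) = (\<lambda>(u', \<tau>). u # \<tau>) ` (SIGMA u':States L n. Traj L n u' t)"
proof (intro set_eqI iffI)
  fix \<tau> assume "\<tau> \<in> Traj L n u (Suc t)"
  then obtain \<tau>' where \<tau>: "\<tau> = u # \<tau>'" "length \<tau>' = Suc t" "set \<tau>' \<subseteq> States L n"
      "\<forall>t'<Suc t. \<not> terminal (\<tau> ! t')"
    unfolding Traj_def by (cases \<tau>) auto
  then have "\<tau>' ! 0 \<in> States L n" "\<tau>' \<in> Traj L n (\<tau>' ! 0) t"
    unfolding Traj_def by (auto simp: nth_mem subsetD)
  with \<tau> show "\<tau> \<in> (\<lambda>(u', \<tau>). u # \<tau>) ` (SIGMA u':States L n. Traj L n u' t)"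
    by (auto simp: image_iff)
next
  fix \<tau> assume "\<tau> \<in> (\<lambda>(u', \<tau>). u # \<tau>) ` (SIGMA u':States L n. Traj L n u' t)"
  with assms show "\<tau> \<in> Traj L n u (Suc t)"
    unfolding Traj_def by (auto simp: less_Suc_eq_0_disj)
qed

lemma occupation_0: "occupation L n W b x 0 u v = (if u \<in> States L n \<and> u = v then 1 else 0)"
  unfolding occupation_def Traj_0 by (auto simp: trajProb_def trajDisc_def)

lemma occupation_outside_States: "u \<notin> States L n \<Longrightarrow> occupation L n W b x t u v = 0"
proof -
  assume "u \<notin> States L n"
  then have "Traj L n u t = {}"
    unfolding Traj_def by (force simp: nth_mem)
  then show ?thesis
    by (simp add: occupation_def)
qed

lemma occupation_Suc_terminal: "terminal u \<Longrightarrow> occupation L n W b x (Suc t) u v = 0"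
  unfolding occupation_def by (simp add: Traj_Suc_terminal)

lemma trajProb_Cons: "\<tau> \<noteq> [] \<Longrightarrow> trajProb n W b x (u # \<tau>) = Pk n W b x u (\<tau> ! 0) * trajProb n W b x \<tau>"
  unfolding trajProb_def by (cases \<tau>) (simp_all del: prod.lessThan_Suc add: prod.lessThan_Suc_shift)

lemma trajDisc_Cons: "\<tau> \<noteq> [] \<Longrightarrow> trajDisc n W (u # \<tau>) = disc n W u (\<tau> ! 0) * trajDisc n W \<tau>"
  unfolding trajDisc_def by (cases \<tau>) (simp_all del: prod.lessThan_Suc add: prod.lessThan_Suc_shift)

lemma occupation_Suc:
  assumes "u \<in> States L n" "\<not> terminal u"
  shows "occupation L n W b x (Suc t) u v
    = (\<Sum>u'\<in>States L n. Pk n W b x u u' * disc n W u u' * occupation L n W b x t u' v)"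
proof -
  let ?w = "\<lambda>\<tau>. trajProb n W b x \<tau> * trajDisc n W \<tau>"
  have first_step: "?w (u # \<tau>) = Pk n W b x u u' * disc n W u u' * ?w \<tau>"
    if "\<tau> \<in> Traj L n u' t" for u' \<tau>
  proof -
    from that have "\<tau> \<noteq> []" "\<tau> ! 0 = u'"
      unfolding Traj_def by auto
    then show ?thesis
      by (simp add: trajProb_Cons trajDisc_Cons)
  qed
  have "inj_on (\<lambda>(u', \<tau>). u # \<tau>) (SIGMA u':States L n. Traj L n u' t)"
    by (auto simp: inj_on_def Traj_def)
  then have "occupation L n W b x (Suc t) u v
      = (\<Sum>u'\<in>States L n. \<Sum>\<tau>\<in>Traj L n u' t. ?w (u # \<tau>) * (if \<tau> ! t = v then 1 else 0))"
    unfolding occupation_def Traj_Suc[OF assms]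
    by (simp add: sum.reindex sum.Sigma finite_States finite_Traj case_prod_unfold)
  also have "\<dots> = (\<Sum>u'\<in>States L n. Pk n W b x u u' * disc n W u u' * occupation L n W b x t u' v)"
    unfolding occupation_def sum_distrib_left
    by (intro sum.cong refl) (simp only: first_step mult.assoc)
  finally show ?thesis .
qed

lemma Pk_nonzero_descends:
  assumes "Pk n W b x (S l i r) u' \<noteq> 0"
  shows "0 < l \<and> (u' = Bot \<or> (\<exists>h r'. u' = S (l - 1) h r'))"
  using assms unfolding Pk_def by (cases u') (auto split: if_splits)

lemma occupation_nonzero_layer:
  "occupation L n W b x t u (S l i r) \<noteq> 0 \<Longrightarrow> \<exists>j q. u = S (l + t) j q"
proof (induction t arbitrary: u)
  case 0
  then show ?case
    by (auto simp: occupation_0 split: if_splits)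
next
  case (Suc t)
  then have "u \<in> States L n" "\<not> terminal u"
    using occupation_outside_States occupation_Suc_terminal by blast+
  with Suc.prems obtain u' where
    "Pk n W b x u u' \<noteq> 0" "occupation L n W b x t u' (S l i r) \<noteq> 0"
    by (metis (no_types, lifting) occupation_Suc mult_eq_0_iff sum.neutral)
  moreover from \<open>\<not> terminal u\<close> obtain m j q where "u = S m j q"
    unfolding terminal_def by (cases u) auto
  moreover from Suc.IH obtain h r' where "u' = S (l + t) h r'"
    using \<open>occupation L n W b x t u' (S l i r) \<noteq> 0\<close> by blast
  ultimately show ?case
    using Pk_nonzero_descends by fastforce
qed

lemma Gamma_eq_occupation:
  "Gamma L n W b x (S m j q) (S l i r)
    = (if l \<le> m then occupation L n W b x (m - l) (S m j q) (S l i r) else 0)"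
proof -
  let ?f = "\<lambda>t. occupation L n W b x t (S m j q) (S l i r)"
  have "?f t = 0" if "t \<notin> (if l \<le> m then {m - l} else {})" for t
  proof (rule ccontr)
    assume "?f t \<noteq> 0"
    then have "m = l + t"
      using occupation_nonzero_layer by blast
    with that show False
      by simp
  qed
  then have "(\<Sum>t. ?f t) = (\<Sum>t\<in>(if l \<le> m then {m - l} else {}). ?f t)"
    by (intro suminf_finite) auto
  then show ?thesis
    by (simp add: Gamma_eq_suminf_occupation)
qed

lemma Gamma_same_layer:
  assumes "l \<le> L" "j < n l"
  shows "Gamma L n W b x (S l j q) (S l i r) = (if j = i \<and> q = r then 1 else 0)"
  using assms by (simp add: Gamma_eq_occupation occupation_0 States_def)

lemma discounted_transition_sum:
  assumes "0 < m" "m \<le> L" "j < n m" "gam n W m j \<noteq> 0"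
  shows "(\<Sum>u'\<in>States L n. Pk n W b x (S m j q) u' * disc n W (S m j q) u' * f u')
    = (if zpre n W b x m j > 0
       then (\<Sum>h<n (m - 1). Wpm W m True j h * f (S (m - 1) h q)
                            + Wpm W m False j h * f (S (m - 1) h (\<not> q)))
       else f Bot)"
proof -
  let ?c = "\<lambda>u'. Pk n W b x (S m j q) u' * disc n W (S m j q) u' * f u'"
  show ?thesis
  proof (cases "zpre n W b x m j > 0")
    case True
    let ?T = "(\<lambda>(h, r'). S (m - 1) h r') ` ({..<n (m - 1)} \<times> UNIV)"
    have "?T \<subseteq> States L n"
      using assms by (auto simp: States_def)
    moreover have "?c u' = 0" if "u' \<notin> ?T" for u'
      using True assms that unfolding Pk_def by (cases u') (auto simp: image_iff)
    ultimately have "(\<Sum>u'\<in>States L n. ?c u') = (\<Sum>u'\<in>?T. ?c u')"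
      by (intro sum.mono_neutral_right finite_States) auto
    also have "\<dots> = (\<Sum>h<n (m - 1). \<Sum>r'\<in>UNIV. ?c (S (m - 1) h r'))"
      by (simp add: sum.reindex inj_on_def case_prod_unfold sum.cartesian_product)
    also have "\<dots> = (\<Sum>h<n (m - 1). \<Sum>r'\<in>UNIV. Wpm W m (sxor q r') j h * f (S (m - 1) h r'))"
      using True assms by (intro sum.cong refl) (simp add: Pk_def disc_def)
    finally show ?thesis
      using True by (cases q) (simp_all add: UNIV_bool sxor_def add.commute)
  next
    case False
    then have "?c u' = (if u' = Bot then f Bot else 0)" for u'
      using assms unfolding Pk_def disc_def by (cases u') auto
    moreover have "Bot \<in> States L n"
      by (simp add: States_def)
    ultimately show ?thesis
      using False by (simp add: sum.delta finite_States)
  qed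
qed

lemma Gamma_Bellman:
  assumes "l < m" "m \<le> L" "j < n m" "gam n W m j \<noteq> 0"
  shows "Gamma L n W b x (S m j q) (S l i r)
    = (if zpre n W b x m j > 0
       then (\<Sum>h<n (m - 1). Wpm W m True j h * Gamma L n W b x (S (m - 1) h q) (S l i r)
                            + Wpm W m False j h * Gamma L n W b x (S (m - 1) h (\<not> q)) (S l i r))
       else 0)"
proof -
  let ?occ = "\<lambda>u'. occupation L n W b x (m - 1 - l) u' (S l i r)"
  have "S m j q \<in> States L n" "\<not> terminal (S m j q)"
    using assms by (auto simp: States_def terminal_def)
  then have "Gamma L n W b x (S m j q) (S l i r)
      = (\<Sum>u'\<in>States L n. Pk n W b x (S m j q) u' * disc n W (S m j q) u' * ?occ u')"
    using assms by (simp add: Gamma_eq_occupation Suc_diff_Suc flip: occupation_Suc)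
  moreover have "?occ Bot = 0"
    using occupation_nonzero_layer by blast
  moreover have "?occ (S (m - 1) h r') = Gamma L n W b x (S (m - 1) h r') (S l i r)" for h r'
    using \<open>l < m\<close> by (auto simp: Gamma_eq_occupation)
  ultimately show ?thesis
    using assms by (simp add: discounted_transition_sum)
qed

lemma Wpm_pos_minus_neg: "Wpm W l True i h - Wpm W l False i h = W l i h"
  by (simp add: Wpm_def posp_def negp_def max_def)

lemma sxor_not_right: "sxor p (\<not> q) = (\<not> sxor p q)"
  by (auto simp: sxor_def)

context
  fixes L :: nat and n :: "nat \<Rightarrow> nat" and W :: "nat \<Rightarrow> nat \<Rightarrow> nat \<Rightarrow> real"
  assumes gam_pos: "\<forall>l'. 1 \<le> l' \<and> l' \<le> L \<longrightarrow> (\<forall>i'<n l'. gam n W l' i' > 0)"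
begin

lemma Gamma_Bellman_layer:
  assumes "Suc (l + d) \<le> L" "j < n (Suc (l + d))"
  shows "Gamma L n W b x (S (Suc (l + d)) j q) (S l i r)
    = (if zpre n W b x (Suc (l + d)) j > 0
       then (\<Sum>h<n (l + d). Wpm W (Suc (l + d)) True j h * Gamma L n W b x (S (l + d) h q) (S l i r)
                         + Wpm W (Suc (l + d)) False j h * Gamma L n W b x (S (l + d) h (\<not> q)) (S l i r))
       else 0)"
  using Gamma_Bellman[of l "Suc (l + d)" L j n W] gam_pos assms by fastforce

lemma fprop_has_derivative_Gamma:
  assumes "l + d \<le> L" "j < n (l + d)"
  shows "((\<lambda>t. fprop n W b x l (\<lambda>s h. if s = k \<and> h = i then t else A s h) d (sxor p q) j)
           has_real_derivative Gamma L n W b x (S (l + d) j q) (S l i (sxor p k))) (at t0)"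
  using assms
proof (induction d arbitrary: j q)
  case 0
  then show ?case
    by (auto simp: Gamma_same_layer sxor_def)
next
  case (Suc d)
  let ?m = "Suc (l + d)"
  have layer: "?m \<le> L" "j < n ?m"
    using Suc.prems by simp_all
  let ?f = "\<lambda>t. fprop n W b x l (\<lambda>s h. if s = k \<and> h = i then t else A s h)"
  show ?case
  proof (cases "zpre n W b x ?m j > 0")
    case True
    have "((\<lambda>t. Bpm b ?m (sxor p q) j + (\<Sum>h<n (l + d).
              Wpm W ?m True j h * ?f t d (sxor p q) h + Wpm W ?m False j h * ?f t d (sxor p (\<not> q)) h))
          has_real_derivative 0 + (\<Sum>h<n (l + d).
              Wpm W ?m True j h * Gamma L n W b x (S (l + d) h q) (S l i (sxor p k))
            + Wpm W ?m False j h * Gamma L n W b x (S (l + d) h (\<not> q)) (S l i (sxor p k)))) (at t0)"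
      using Suc by (intro DERIV_add DERIV_const DERIV_sum DERIV_cmult) auto
    then show ?thesis
      using True layer by (simp add: Gamma_Bellman_layer sxor_not_right)
  next
    case False
    then show ?thesis
      using layer by (simp add: Gamma_Bellman_layer)
  qed
qed

lemma Jm_eq_Gamma_difference:
  assumes "l + d \<le> L" "j < n (l + d)"
  shows "Jm n W b x l d j i
    = xi q True * (Gamma L n W b x (S (l + d) j q) (S l i True) - Gamma L n W b x (S (l + d) j q) (S l i False))"
  using assms
proof (induction d arbitrary: j q)
  case 0
  then show ?case
    by (simp add: Gamma_same_layer xi_def)
next
  case (Suc d)
  let ?m = "Suc (l + d)"
  have layer: "?m \<le> L" "j < n ?m"
    using Suc.prems by simp_all
  let ?\<Delta> = "\<lambda>h q'. Gamma L n W b x (S (l + d) h q') (S l i True) - Gamma L n W b x (S (l + d) h q') (S l i False)"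
  have xi_sq: "xi q' True * xi q' True = 1" for q'
    by (simp add: xi_def)
  have IH: "?\<Delta> h q' = xi q' True * Jm n W b x l d h i" if "h < n (l + d)" for h q'
  proof -
    have "Jm n W b x l d h i = xi q' True * ?\<Delta> h q'"
      using Suc that by simp
    then show ?thesis
      using xi_sq by (simp add: mult.assoc[symmetric])
  qed
  show ?case
  proof (cases "zpre n W b x ?m j > 0")
    case True
    have "xi q True * (Gamma L n W b x (S ?m j q) (S l i True) - Gamma L n W b x (S ?m j q) (S l i False))
      = xi q True * (\<Sum>h<n (l + d). Wpm W ?m True j h * ?\<Delta> h q + Wpm W ?m False j h * ?\<Delta> h (\<not> q))"
      unfolding Gamma_Bellman_layer[OF layer] using True
      by (simp add: sum_subtractf[symmetric] algebra_simps)
    also have "\<dots> = xi q True * (\<Sum>h<n (l + d). Wpm W ?m True j h * (xi q True * Jm n W b x l d h i)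
                                        + Wpm W ?m False j h * (- xi q True * Jm n W b x l d h i))"
      by (intro arg_cong[where f = "\<lambda>z. xi q True * z"] sum.cong refl) (simp add: IH xi_def)
    also have "\<dots> = (\<Sum>h<n (l + d).
        (xi q True * xi q True) * ((Wpm W ?m True j h - Wpm W ?m False j h) * Jm n W b x l d h i))"
      by (simp add: sum_distrib_left algebra_simps)
    also have "\<dots> = (\<Sum>h<n (l + d). W ?m j h * Jm n W b x l d h i)"
      by (simp add: xi_sq Wpm_pos_minus_neg)
    finally show ?thesis
      using True by simp
  next
    case False
    then show ?thesis
      using layer by (simp add: Gamma_Bellman_layer)
  qed
qed

end

theorem mainTheorem6:
  fixes L :: nat and n :: "nat \<Rightarrow> nat" and W :: "nat \<Rightarrow> nat \<Rightarrow> nat \<Rightarrow> real"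
    and b :: "nat \<Rightarrow> nat \<Rightarrow> real" and x :: "nat \<Rightarrow> real"
    and m j l i :: nat and q p k :: bool
  assumes gpos: "\<forall>l'. 1 \<le> l' \<and> l' \<le> L \<longrightarrow> (\<forall>i'<n l'. gam n W l' i' > 0)"
    and "1 \<le> m" and "m \<le> L" and "j < n m"
    and "l \<le> m" and "i < n l"
  shows "((\<lambda>t. fprop n W b x l (\<lambda>s h. if s = k \<and> h = i then t else astop n W b x l s h)
                  (m - l) (sxor p q) j)
            has_real_derivative Gamma L n W b x (S m j q) (S l i (sxor p k)))
           (at (astop n W b x l k i))
       \<and> Jm n W b x l (m - l) j i
           = xi q True * (Gamma L n W b x (S m j q) (S l i True) - Gamma L n W b x (S m j q) (S l i False))"
proof -
  have "l + (m - l) = m"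
    using \<open>l \<le> m\<close> by simp
  with \<open>m \<le> L\<close> \<open>j < n m\<close> show ?thesis
    using fprop_has_derivative_Gamma[OF gpos, of l "m - l" j] Jm_eq_Gamma_difference[OF gpos, of l "m - l" j]
    by simp
qed

end
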